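(* For every stratified space $(A,\Sigma)$ there exists a family of subsets $(W_X)_{X\in\Sigma}$ such that each $W_X$ is an open neighbourhood of $X$, and for $X,Y\in\Sigma$, $W_X$ intersects $W_Y$ if and only if $X$ and $Y$ are comparable (i.e. $X\le Y$ or $Y\le X$).
   Context: A stratified space $(A,\Sigma)$ is a second-countable metric space $A$ with a locally finite partition $\Sigma$ of $A$ into locally closed subsets (strata) such that whenever $Y\cap cl(X)\neq\emptyset$ one has $Y\subset cl(X)$; this is written $Y\le X$ (and $X$ is said to be incident to $Y$). The relation $\le$ is a partial order on $\Sigma$. *)

theory Defs
  imports "HOL-Analysis.Analysis"
begin

definition locally_closed :: "'a::topological_space set \<Rightarrow> bool" where
  "locally_closed S \<longleftrightarrow> (\<exists>U C. open U \<and> closed C \<and> S = U \<inter> C)"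

definition stratum_le :: "'a::topological_space set \<Rightarrow> 'a set \<Rightarrow> bool" where
  "stratum_le Y X \<longleftrightarrow> Y \<subseteq> closure X"

definition stratified_space :: "'a::{metric_space,second_countable_topology} set set \<Rightarrow> bool" where
  "stratified_space \<Sigma> \<longleftrightarrow>
     \<Union>\<Sigma> = UNIV \<and> {} \<notin> \<Sigma> \<and> disjoint \<Sigma> \<and>
     locally_finite_in euclidean \<Sigma> \<and>
     (\<forall>S\<in>\<Sigma>. locally_closed S) \<and>
     (\<forall>X\<in>\<Sigma>. \<forall>Y\<in>\<Sigma>. Y \<inter> closure X \<noteq> {} \<longrightarrow> Y \<subseteq> closure X)"

end

theory Submission
  imports Defs
begin

text \<open>Around each stratum X collect all strata incomparable with X; by local finiteness and the
  frontier condition their union Z stays away from the closure of X. The neighbourhood of X is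
  then the set of points closer to X than to Z. If X and Y are incomparable, then Y \<subseteq> Z(X) and
  X \<subseteq> Z(Y), so a common point p would satisfy d(p,X) < d(p,Z(X)) \<le> d(p,Y) < d(p,Z(Y)) \<le> d(p,X).
  If X \<le> Y, an open set containing X meets the closure of Y and hence Y itself.\<close>

lemma open_infdist_less: "open {p. infdist p A < infdist p B}"
  by (auto intro!: open_Collect_less continuous_intros)

lemma subset_infdist_less:
  assumes "A \<inter> closure B = {}" and "B \<noteq> {}"
  shows "A \<subseteq> {p. infdist p A < infdist p B}"
proof
  fix x assume x: "x \<in> A"
  then have "infdist x B \<noteq> 0"
    using assms in_closure_iff_infdist_zero by blast
  then have "0 < infdist x B"
    using infdist_nonneg order_le_neq_trans by metis
  then show "x \<in> {p. infdist p A < infdist p B}"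
    using x by simp
qed

lemma infdist_less_disjoint:
  assumes "A \<subseteq> B'" and "B \<subseteq> A'" and "A \<noteq> {}" and "B \<noteq> {}"
  shows "{p. infdist p A < infdist p A'} \<inter> {p. infdist p B < infdist p B'} = {}"
proof (rule ccontr)
  assume "\<not> ?thesis"
  then obtain p where "infdist p A < infdist p A'" and "infdist p B < infdist p B'"
    by blast
  moreover have "infdist p A' \<le> infdist p B" and "infdist p B' \<le> infdist p A"
    using assms infdist_mono by blast+
  ultimately show False by simp
qed

lemma open_nbhds_meet_if_closure:
  fixes X Y :: "'a::topological_space set"
  assumes "open U" "X \<subseteq> U" "open V" "Y \<subseteq> V" "X \<noteq> {}" "X \<subseteq> closure Y"
  shows "U \<inter> V \<noteq> {}"
proof -
  have "U \<inter> closure Y \<noteq> {}"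
    using assms by blast
  then have "U \<inter> Y \<noteq> {}"
    using open_Int_closure_eq_empty[OF \<open>open U\<close>] by blast
  then show ?thesis
    using \<open>Y \<subseteq> V\<close> by blast
qed

definition incomparable_strata :: "'a::topological_space set set \<Rightarrow> 'a set \<Rightarrow> 'a set set" where
  "incomparable_strata \<Sigma> X = {Y\<in>\<Sigma>. \<not> (stratum_le X Y \<or> stratum_le Y X)}"

lemma stratum_disjoint_closure_incomparable:
  assumes S: "stratified_space \<Sigma>" and X: "X \<in> \<Sigma>"
  shows "X \<inter> closure (\<Union>(incomparable_strata \<Sigma> X)) = {}"
proof -
  have locally_finite: "locally_finite_in euclidean (incomparable_strata \<Sigma> X)"
    by (rule locally_finite_in_subset[where \<A> = \<Sigma>])
      (use S in \<open>auto simp: stratified_space_def incomparable_strata_def\<close>)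
  have closure_Union: "closure (\<Union>(incomparable_strata \<Sigma> X))
      = \<Union>(closure ` incomparable_strata \<Sigma> X)"
    using closure_of_locally_finite_Union[OF locally_finite] by simp
  have frontier: "\<forall>X\<in>\<Sigma>. \<forall>Y\<in>\<Sigma>. Y \<inter> closure X \<noteq> {} \<longrightarrow> Y \<subseteq> closure X"
    using S unfolding stratified_space_def by blast
  have "X \<inter> closure Y = {}" if "Y \<in> incomparable_strata \<Sigma> X" for Y
  proof (rule ccontr)
    assume "X \<inter> closure Y \<noteq> {}"
    then have "stratum_le X Y"
      using frontier X that unfolding incomparable_strata_def stratum_le_def by blast
    then show False
      using that unfolding incomparable_strata_def by blast
  qed
  then show ?thesis
    unfolding closure_Union by blast
qed

text \<open>The case distinction is needed because \<open>infdist p {} = 0\<close>, which would make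
  the set of points closer to X than to Z empty.\<close>

definition stratum_nbhd :: "'a::metric_space set set \<Rightarrow> 'a set \<Rightarrow> 'a set" where
  "stratum_nbhd \<Sigma> X =
     (let Z = \<Union>(incomparable_strata \<Sigma> X)
      in if Z = {} then UNIV else {p. infdist p X < infdist p Z})"

lemma open_stratum_nbhd: "open (stratum_nbhd \<Sigma> X)"
  unfolding stratum_nbhd_def Let_def by (simp add: open_infdist_less)

lemma stratum_subset_stratum_nbhd:
  assumes "stratified_space \<Sigma>" and "X \<in> \<Sigma>"
  shows "X \<subseteq> stratum_nbhd \<Sigma> X"
  using subset_infdist_less[OF stratum_disjoint_closure_incomparable[OF assms]]
  unfolding stratum_nbhd_def Let_def by auto

lemma stratum_nbhd_Int_eq_empty:
  assumes "stratified_space \<Sigma>" and "X \<in> \<Sigma>" and "Y \<in> \<Sigma>"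
    and "\<not> (stratum_le X Y \<or> stratum_le Y X)"
  shows "stratum_nbhd \<Sigma> X \<inter> stratum_nbhd \<Sigma> Y = {}"
proof -
  have "Y \<in> incomparable_strata \<Sigma> X" and "X \<in> incomparable_strata \<Sigma> Y"
    using assms unfolding incomparable_strata_def by auto
  moreover have "X \<noteq> {}" and "Y \<noteq> {}"
    using assms unfolding stratified_space_def by auto
  ultimately show ?thesis
    using infdist_less_disjoint[of X "\<Union>(incomparable_strata \<Sigma> Y)"
        Y "\<Union>(incomparable_strata \<Sigma> X)"]
    unfolding stratum_nbhd_def Let_def by auto
qed

lemma stratum_nbhd_Int_ne_empty:
  assumes "stratified_space \<Sigma>" and "X \<in> \<Sigma>" and "Y \<in> \<Sigma>" and "stratum_le X Y"
  shows "stratum_nbhd \<Sigma> X \<inter> stratum_nbhd \<Sigma> Y \<noteq> {}"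
proof (rule open_nbhds_meet_if_closure)
  show "X \<noteq> {}"
    using assms unfolding stratified_space_def by auto
qed (use assms in \<open>auto simp: open_stratum_nbhd stratum_subset_stratum_nbhd stratum_le_def\<close>)

theorem lemma1p3p17:
  fixes \<Sigma> :: "'a::{metric_space,second_countable_topology} set set"
  assumes "stratified_space \<Sigma>"
  shows "\<exists>W :: 'a set \<Rightarrow> 'a set.
           (\<forall>X\<in>\<Sigma>. open (W X) \<and> X \<subseteq> W X) \<and>
           (\<forall>X\<in>\<Sigma>. \<forall>Y\<in>\<Sigma>. W X \<inter> W Y \<noteq> {} \<longleftrightarrow> (stratum_le X Y \<or> stratum_le Y X))"
proof (intro exI conjI ballI)
  fix X Y assume "X \<in> \<Sigma>" and "Y \<in> \<Sigma>"
  then show "stratum_nbhd \<Sigma> X \<inter> stratum_nbhd \<Sigma> Y \<noteq> {}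
      \<longleftrightarrow> stratum_le X Y \<or> stratum_le Y X"
    using assms stratum_nbhd_Int_eq_empty stratum_nbhd_Int_ne_empty
    by (metis Int_commute)
qed (use assms in \<open>simp_all add: open_stratum_nbhd stratum_subset_stratum_nbhd\<close>)

end
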